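(* Let $S$ be a left cancellative semigroup and let $U$ be the set of regular elements of $S$. Then: (i) for all $x,y\in S$, if $xy\in U$ then $x\in U$ and $y\in U$; in particular $S\setminus U$ is either empty or an ideal of $S$; (ii) if $U$ is non-empty, then $U$ is a subsemigroup of $S$ which is a right group; (iii) if $x\in S$ and the $\mathcal{R}$-class $R_x$ of $x$ in $S$ has more than one element, then $R_x=xU$; (iv) if $U$ is non-empty, then for every $x\in S$ the set $xU$ is an $\mathcal{R}$-class of $S$ (not necessarily containing $x$).
   Context: $S$ is left cancellative if $ax=ay$ implies $x=y$ for all $a,x,y\in S$. An element $x$ is regular if $x=xzx$ for some $z\in S$. $\mathcal{R}$ is Green's relation: $x\,\mathcal{R}\,y$ iff $xS^1=yS^1$. A right zero semigroup is a semigroup $E$ with $ef=f$ for all $e,f\in E$; a right group is a semigroup isomorphic to a direct product $G\times E$ of a group $G$ and a right zero semigroup $E$. *)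

theory Defs
  imports "HOL-Algebra.Group"
begin

text \<open>The semigroup S is the whole type 'a of class semigroup_mult.\<close>

definition left_cancellative :: "('a::semigroup_mult) itself \<Rightarrow> bool" where
  "left_cancellative _ \<longleftrightarrow> (\<forall>a x y::'a. a * x = a * y \<longrightarrow> x = y)"

definition regular_el :: "'a::semigroup_mult \<Rightarrow> bool" where
  "regular_el x \<longleftrightarrow> (\<exists>z. x = x * z * x)"

definition is_ideal :: "('a::semigroup_mult) set \<Rightarrow> bool" where
  "is_ideal I \<longleftrightarrow> I \<noteq> {} \<and> (\<forall>x\<in>I. \<forall>s. x * s \<in> I \<and> s * x \<in> I)"

definition subsemigroup :: "('a::semigroup_mult) set \<Rightarrow> bool" where
  "subsemigroup T \<longleftrightarrow> (\<forall>x\<in>T. \<forall>y\<in>T. x * y \<in> T)"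

definition right_ideal1 :: "'a::semigroup_mult \<Rightarrow> 'a set" where
  "right_ideal1 x = insert x (range (\<lambda>s. x * s))"

definition R_class :: "'a::semigroup_mult \<Rightarrow> 'a set" where
  "R_class x = {y. right_ideal1 y = right_ideal1 x}"

definition right_zero_semigroup :: "'b set \<Rightarrow> ('b \<Rightarrow> 'b \<Rightarrow> 'b) \<Rightarrow> bool" where
  "right_zero_semigroup E m \<longleftrightarrow> (\<forall>e\<in>E. \<forall>f\<in>E. m e f = f)"

text \<open>The group and the
  right zero semigroup are taken with carriers in the type 'a (no loss: both embed in T).\<close>
definition right_group :: "('a::semigroup_mult) set \<Rightarrow> bool" where
  "right_group T \<longleftrightarrow> subsemigroup T \<and>
     (\<exists>(G :: 'a monoid) (E :: 'a set) (\<phi> :: 'a \<Rightarrow> 'a \<times> 'a).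
        group G \<and> right_zero_semigroup E (\<lambda>e f. f) \<and>
        bij_betw \<phi> T (carrier G \<times> E) \<and>
        (\<forall>x\<in>T. \<forall>y\<in>T. \<phi> (x * y) = (fst (\<phi> x) \<otimes>\<^bsub>G\<^esub> fst (\<phi> y), snd (\<phi> y))))"

end

theory Submission
  imports Defs
begin

(* The whole argument rests on one observation: in a left cancellative semigroup every
   idempotent e is a left identity (e(es) = es forces es = s), and every right unit of an
   element (xe = x) is idempotent and is uniquely determined by x.  For a regular x with
   x = xzx the element zx is such a right unit, so the right unit of x, written
   right_unit x, is defined by a description.

   From this we derive, in order: the set U of regular elements is closed under products
   and under taking factors (part (i)); after fixing one idempotent e, U is the right group
   Ue x {idempotents} via x \<mapsto> (xe, right_unit x) (part (ii)); and for any y with a right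
   unit, the R-class of y is yU.  Part (iii) follows because a nontrivial R-class of x
   gives x a right unit, and part (iv) because xU = (xe)U and xe has the right unit e. *)

lemma idempotent_regular: "(e::'a::semigroup_mult) * e = e \<Longrightarrow> regular_el e"
  unfolding regular_el_def by (rule exI[of _ e]) simp

text \<open>Right units of an element: the right unit of a regular element in a left
  cancellative semigroup is unique, so it may be named by a description.\<close>

definition right_unit :: "'a::semigroup_mult \<Rightarrow> 'a" where
  "right_unit x = (THE e. x * e = x)"

lemma right_ideal1_mono:
  fixes w y :: "'a::semigroup_mult"
  assumes "w = y * a"
  shows "right_ideal1 w \<subseteq> right_ideal1 y"
  unfolding right_ideal1_def using assms by (auto simp: mult.assoc)

lemma R_classI:
  fixes w y :: "'a::semigroup_mult"
  assumes "w = y * a" and "y = w * b"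
  shows "w \<in> R_class y"
proof -
  have "right_ideal1 w = right_ideal1 y"
    using right_ideal1_mono[OF assms(1)] right_ideal1_mono[OF assms(2)] by (rule subset_antisym)
  then show ?thesis unfolding R_class_def by simp
qed

lemma R_class_other:
  fixes w y :: "'a::semigroup_mult"
  assumes "w \<in> R_class y" and "w \<noteq> y"
  obtains a b where "w = y * a" and "y = w * b"
proof -
  have eq: "right_ideal1 w = right_ideal1 y" using assms(1) unfolding R_class_def by simp
  have "w \<in> right_ideal1 y" and "y \<in> right_ideal1 w"
    using eq unfolding right_ideal1_def by auto
  then obtain a b where "w = y * a" and "y = w * b"
    using assms(2) unfolding right_ideal1_def by auto
  then show ?thesis by (rule that)
qed

context
  assumes lc: "left_cancellative TYPE('a::semigroup_mult)"
begin

lemma cancel_left: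
  fixes a x y :: 'a
  shows "a * x = a * y \<Longrightarrow> x = y"
  using lc unfolding left_cancellative_def by blast

lemma idempotent_left_identity:
  fixes e s :: 'a
  assumes "e * e = e"
  shows "e * s = s"
proof (rule cancel_left[of e])
  show "e * (e * s) = e * s" by (simp add: mult.assoc[symmetric] assms)
qed

lemma right_unit_idempotent:
  fixes x e :: 'a
  assumes "x * e = x"
  shows "e * e = e"
proof (rule cancel_left[of x])
  show "x * (e * e) = x * e" using assms by (simp add: mult.assoc[symmetric])
qed

lemma right_unit_eq:
  fixes x e :: 'a
  assumes "x * e = x"
  shows "right_unit x = e"
  unfolding right_unit_def using assms cancel_left[of x] by (intro the_equality) auto

lemma regular_inverse:
  fixes x :: 'a
  assumes "regular_el x"
  obtains z where "x * (z * x) = x" and "\<And>s. z * (x * s) = s"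
proof -
  obtain z where "x = x * z * x" using assms unfolding regular_el_def by blast
  then have xzx: "x * (z * x) = x" by (simp add: mult.assoc)
  have "(z * x) * s = s" for s
    by (rule idempotent_left_identity[OF right_unit_idempotent[OF xzx]])
  then show ?thesis using that xzx by (simp add: mult.assoc)
qed

lemma mult_right_unit:
  fixes x :: 'a
  assumes "regular_el x"
  shows "x * right_unit x = x"
proof -
  obtain z where "x * (z * x) = x" using regular_inverse[OF assms] by blast
  then show ?thesis using right_unit_eq by simp
qed

lemma right_unit_mult:
  fixes x y :: 'a
  assumes "regular_el y"
  shows "right_unit (x * y) = right_unit y"
proof (rule right_unit_eq)
  show "x * y * right_unit y = x * y" using mult_right_unit[OF assms] by (simp add: mult.assoc)
qed

lemma regular_factors:
  fixes x y :: 'a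
  assumes "regular_el (x * y)"
  shows "regular_el x" and "regular_el y"
proof -
  obtain z where xyz: "x * y = x * y * z * (x * y)" using assms unfolding regular_el_def by blast
  have "x * (y * (z * x) * y) = x * y" using xyz[symmetric] by (simp add: mult.assoc)
  then have "y = y * (z * x) * y" using cancel_left by metis
  then show "regular_el y" unfolding regular_el_def by blast
  have "(x * y * z) * (x * y * z) = (x * y * z * (x * y)) * z" by (simp add: mult.assoc)
  also have "\<dots> = x * y * z" using xyz[symmetric] by simp
  finally have "(x * y * z) * (x * y * z) = x * y * z" .
  then have "(x * y * z) * x = x" by (rule idempotent_left_identity)
  then have "x = x * (y * z) * x" by (simp add: mult.assoc)
  then show "regular_el x" unfolding regular_el_def by blast
qed

lemma regular_mult:
  fixes x y :: 'a
  assumes "regular_el x" and "regular_el y"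
  shows "regular_el (x * y)"
proof -
  obtain z where z: "\<And>s. z * (x * s) = s" using regular_inverse[OF assms(1)] by blast
  obtain w where w: "y * (w * y) = y" using regular_inverse[OF assms(2)] by blast
  have "x * y * (w * z) * (x * y) = x * (y * (w * (z * (x * y))))" by (simp add: mult.assoc)
  also have "\<dots> = x * y" using z w by simp
  finally show ?thesis unfolding regular_el_def by (intro exI[of _ "w * z"]) simp
qed

lemma subsemigroup_regular: "subsemigroup {x :: 'a. regular_el x}"
  unfolding subsemigroup_def using regular_mult by blast

lemma nonregular_ideal: "- {x :: 'a. regular_el x} = {} \<or> is_ideal (- {x :: 'a. regular_el x})"
  unfolding is_ideal_def using regular_factors by blast

text \<open>Fix an idempotent e.  The regular elements fixed by right multiplication
  with e form a group with identity e (the maximal subgroup Ue), and x \<mapsto> (xe, right_unit x)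
  is an isomorphism of U onto Ue \<times> {idempotents}.\<close>

definition maximal_subgroup :: "'a \<Rightarrow> 'a monoid" where
  "maximal_subgroup e = \<lparr>carrier = {g. regular_el g \<and> g * e = g}, mult = (*), one = e\<rparr>"

lemma group_maximal_subgroup:
  fixes e :: 'a
  assumes e: "e * e = e"
  shows "group (maximal_subgroup e)"
proof (rule groupI)
  fix g assume "g \<in> carrier (maximal_subgroup e)"
  then have g: "regular_el g" "g * e = g" unfolding maximal_subgroup_def by auto
  obtain z where "g * (z * g) = g" using regular_inverse[OF g(1)] by blast
  then have zg: "z * g = e" using g(2) cancel_left by metis
  have inv: "(z * e) * g = e" by (simp add: mult.assoc idempotent_left_identity[OF e] zg)
  then have "regular_el (z * e)"
    unfolding regular_el_def by (intro exI[of _ g]) (simp add: idempotent_left_identity[OF e])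
  moreover have "(z * e) * e = z * e" by (simp add: mult.assoc e)
  ultimately show "\<exists>h\<in>carrier (maximal_subgroup e). h \<otimes>\<^bsub>maximal_subgroup e\<^esub> g
      = \<one>\<^bsub>maximal_subgroup e\<^esub>"
    unfolding maximal_subgroup_def using inv by auto
qed (auto simp: maximal_subgroup_def mult.assoc idempotent_left_identity e
        idempotent_regular regular_mult)

definition right_group_coords :: "'a \<Rightarrow> 'a \<Rightarrow> 'a \<times> 'a" where
  "right_group_coords e x = (x * e, right_unit x)"

lemma bij_right_group_coords:
  fixes e :: 'a
  assumes e: "e * e = e"
  shows "bij_betw (right_group_coords e) {x. regular_el x}
           (carrier (maximal_subgroup e) \<times> {f::'a. f * f = f})"
proof (rule bij_betw_byWitness[where f' = "\<lambda>(a, f). a * f"])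
  have el: "\<And>s. e * s = s" using idempotent_left_identity[OF e] .
  show "\<forall>x\<in>{x. regular_el x}. (\<lambda>(a, f). a * f) (right_group_coords e x) = x"
    using mult_right_unit by (simp add: right_group_coords_def mult.assoc el)
  show "\<forall>p\<in>carrier (maximal_subgroup e) \<times> {f::'a. f * f = f}.
      right_group_coords e ((\<lambda>(a, f). a * f) p) = p"
  proof
    fix p assume "p \<in> carrier (maximal_subgroup e) \<times> {f::'a. f * f = f}"
    then obtain a f where p: "p = (a, f)" "a * e = a" "f * f = f"
      unfolding maximal_subgroup_def by auto
    have "right_unit (a * f) = f" by (rule right_unit_eq) (simp add: mult.assoc p(3))
    moreover have "a * f * e = a" by (simp add: mult.assoc idempotent_left_identity[OF p(3)] p(2))
    ultimately show "right_group_coords e ((\<lambda>(a, f). a * f) p) = p"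
      unfolding right_group_coords_def p by simp
  qed
  show "right_group_coords e ` {x. regular_el x} \<subseteq> carrier (maximal_subgroup e) \<times> {f::'a. f * f = f}"
    using mult_right_unit right_unit_idempotent
    by (auto simp: right_group_coords_def maximal_subgroup_def mult.assoc e
        regular_mult idempotent_regular)
  show "(\<lambda>(a, f). a * f) ` (carrier (maximal_subgroup e) \<times> {f::'a. f * f = f}) \<subseteq> {x. regular_el x}"
    by (auto simp: maximal_subgroup_def regular_mult idempotent_regular)
qed

lemma right_group_coords_mult:
  fixes e x y :: 'a
  assumes e: "e * e = e" and y: "regular_el y"
  shows "right_group_coords e (x * y)
     = (fst (right_group_coords e x) \<otimes>\<^bsub>maximal_subgroup e\<^esub> fst (right_group_coords e y),
        snd (right_group_coords e y))"
  by (simp add: right_group_coords_def maximal_subgroup_def right_unit_mult[OF y]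
      mult.assoc idempotent_left_identity[OF e])

lemma right_group_regular:
  fixes e :: 'a
  assumes e: "e * e = e"
  shows "right_group {x::'a. regular_el x}"
  unfolding right_group_def right_zero_semigroup_def
  using subsemigroup_regular group_maximal_subgroup[OF e] bij_right_group_coords[OF e]
    right_group_coords_mult[OF e]
  by (intro conjI exI[of _ "maximal_subgroup e"] exI[of _ "{f::'a. f * f = f}"]
      exI[of _ "right_group_coords e"]) auto

text \<open>The R-class of an element y with a right unit e is yU: a regular factor u can be
  undone since zu is a left identity for u = uzu, and conversely w = ya, y = wb give
  y(aba) = ya, so a = aba is regular.\<close>

lemma R_class_right_unit:
  fixes y e :: 'a
  assumes ye: "y * e = y"
  shows "R_class y = (\<lambda>u. y * u) ` {x. regular_el x}"
proof
  show "R_class y \<subseteq> (\<lambda>u. y * u) ` {x. regular_el x}"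
  proof
    fix w assume w: "w \<in> R_class y"
    show "w \<in> (\<lambda>u. y * u) ` {x. regular_el x}"
    proof (cases "w = y")
      case True
      then show ?thesis using ye idempotent_regular[OF right_unit_idempotent[OF ye]] by force
    next
      case False
      then obtain a b where a: "w = y * a" and b: "y = w * b" using R_class_other[OF w] by blast
      have "y * (a * b * a) = y * a" using a b by (simp add: mult.assoc[symmetric])
      then have "a = a * b * a" using cancel_left by metis
      then show ?thesis using a unfolding regular_el_def by blast
    qed
  qed
next
  show "(\<lambda>u. y * u) ` {x. regular_el x} \<subseteq> R_class y"
  proof
    fix w assume "w \<in> (\<lambda>u. y * u) ` {x. regular_el x}"
    then obtain u where u: "regular_el u" and w: "w = y * u" by blast
    obtain z where "u * (z * u) = u" using regular_inverse[OF u] by blast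
    then have "(u * z) * (u * z) = u * z" by (simp add: mult.assoc[symmetric])
    then have "(u * z) * e = e" by (rule idempotent_left_identity)
    then have "y = w * (z * e)" using w ye by (simp add: mult.assoc)
    then show "w \<in> R_class y" using w by (rule R_classI[rotated])
  qed
qed

lemma R_class_nontrivial_right_unit:
  fixes x w :: 'a
  assumes "w \<in> R_class x" and "w \<noteq> x"
  obtains e where "x * e = x"
proof -
  obtain a b where "w = x * a" and "x = w * b" using R_class_other[OF assms] by blast
  then have "x * (a * b) = x" by (metis mult.assoc)
  then show ?thesis using that by blast
qed

end

theorem mainTheorem7:
  fixes U :: "('a::semigroup_mult) set"
  assumes lc: "left_cancellative TYPE('a)"
    and U_def: "U = {x. regular_el x}"
  shows "(\<forall>x y. x * y \<in> U \<longrightarrow> x \<in> U \<and> y \<in> U)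
       \<and> (- U = {} \<or> is_ideal (- U))
       \<and> (U \<noteq> {} \<longrightarrow> subsemigroup U \<and> right_group U)
       \<and> (\<forall>x. (\<exists>y\<in>R_class x. y \<noteq> x) \<longrightarrow> R_class x = (\<lambda>u. x * u) ` U)
       \<and> (U \<noteq> {} \<longrightarrow> (\<forall>x. \<exists>y. (\<lambda>u. x * u) ` U = R_class y))"
proof -
  have parts_ii_iv: "subsemigroup U \<and> right_group U \<and> (\<forall>x. \<exists>y. (\<lambda>u. x * u) ` U = R_class y)"
    if "U \<noteq> {}"
  proof -
    obtain u :: 'a where "regular_el u" using \<open>U \<noteq> {}\<close> U_def by blast
    define e where "e = right_unit u"
    have e: "e * e = e"
      unfolding e_def by (rule right_unit_idempotent[OF lc mult_right_unit[OF lc \<open>regular_el u\<close>]])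
    have "(\<lambda>u. x * u) ` U = R_class (x * e)" for x
    proof -
      have "(\<lambda>u. x * u) ` U = (\<lambda>u. x * e * u) ` U"
        using idempotent_left_identity[OF lc e] by (simp add: mult.assoc)
      then show ?thesis using R_class_right_unit[OF lc, of "x * e" e] U_def
        by (simp add: mult.assoc e)
    qed
    then show ?thesis
      using subsemigroup_regular[OF lc] right_group_regular[OF lc e] U_def by blast
  qed
  have part_iii: "R_class x = (\<lambda>u. x * u) ` U" if "y \<in> R_class x" "y \<noteq> x" for x y
    using R_class_nontrivial_right_unit[OF lc that] R_class_right_unit[OF lc] U_def by metis
  have part_i: "\<forall>x y. x * y \<in> U \<longrightarrow> x \<in> U \<and> y \<in> U"
    using regular_factors[OF lc] U_def by blast
  have ideal: "- U = {} \<or> is_ideal (- U)" using nonregular_ideal[OF lc] U_def by simp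
  show ?thesis using part_i ideal parts_ii_iv part_iii by blast
qed

end
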